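(* With the notation of the context, for all $f\neq f'$ in $[n]$, all $0\le r<d$, all $\lambda\ge0$, and every fixed choice of $(\sigma_1,b_1),\dots,(\sigma_r,b_r)$, \[h_r(f,f';\sigma_1,b_1,\dots,\sigma_r,b_r)\ge\mathbb{E}_{\sigma_{r+1},b_{r+1}}\,h_{r+1}(f,f';\sigma_1,b_1,\dots,\sigma_r,b_r,\sigma_{r+1},b_{r+1}),\] where $\sigma_{r+1}$ is uniform among odd integers in $[n]$ and $b_{r+1}$ is independently uniform in $[n]$.
   Context: $n,B$ are powers of $2$ with $2\le B\le n$, $F\ge2$ even, $\epsilon=(1/4)^{F-1}$, and $\hat G$ is a flat filter with $B$ buckets and sharpness $F$: a sequence in $\mathbb{R}^n$ indexed by $\mathbb{Z}_n$ (representatives in $\{-n/2,\dots,n/2-1\}$), symmetric about $0$, with $\hat G_f\in[0,1]$ for all $f$, $\hat G_f\ge1-\epsilon$ for $|f|\le n/(2B)$, and $\hat G_f\le\epsilon\,(n/(B|f|))^{F-1}$ for $|f|\ge n/B$. $M(\lambda)=e^{\lambda\epsilon}[(2/B+1/n)(e^{\lambda(1-\epsilon)}-1)+1]$. For $\sigma,b\in[n]$: $\pi_{\sigma,b}(f)=\sigma(f-b)\bmod n$, $h_{\sigma,b}(f)=\lfloor(B/n)\pi_{\sigma,b}(f)+1/2\rfloor$, $o_{f,\sigma,b}(f')=\pi_{\sigma,b}(f')-(n/B)h_{\sigma,b}(f)\bmod n$; $o_{f,\ell}$ abbreviates $o_{f,\sigma_\ell,b_\ell}$. For $d\ge1$,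 $\beta>0$: $h_r(f,f';\sigma_1,b_1,\dots,\sigma_r,b_r)=e^{-\lambda\beta}\exp(\lambda\sum_{\ell=1}^r\hat G_{o_{f,\ell}(f')})M(\lambda)^{d-r}$. *)

theory Defs
  imports Complex_Main
begin

text \<open>Elements of Z_n are represented by naturals in {0..<n} = [n].
  The signed representative of f in {-n/2, ..., n/2-1}.\<close>
definition zrep :: "nat \<Rightarrow> nat \<Rightarrow> int" where
  "zrep n f = (if f < n div 2 then int f else int f - int n)"

definition flat_eps :: "nat \<Rightarrow> real" where
  "flat_eps F = (1/4) ^ (F - 1)"

definition flat_filter :: "nat \<Rightarrow> nat \<Rightarrow> nat \<Rightarrow> (nat \<Rightarrow> real) \<Rightarrow> bool" where
  "flat_filter n B F G \<longleftrightarrow>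
     (\<forall>f<n. G ((n - f) mod n) = G f) \<and>
     (\<forall>f<n. 0 \<le> G f \<and> G f \<le> 1) \<and>
     (\<forall>f<n. real_of_int \<bar>zrep n f\<bar> \<le> real n / (2 * real B) \<longrightarrow> G f \<ge> 1 - flat_eps F) \<and>
     (\<forall>f<n. real_of_int \<bar>zrep n f\<bar> \<ge> real n / real B \<longrightarrow>
            G f \<le> flat_eps F * (real n / (real B * real_of_int \<bar>zrep n f\<bar>)) ^ (F - 1))"

definition Mfun :: "nat \<Rightarrow> nat \<Rightarrow> nat \<Rightarrow> real \<Rightarrow> real" where
  "Mfun n B F lam = exp (lam * flat_eps F) *
     ((2 / real B + 1 / real n) * (exp (lam * (1 - flat_eps F)) - 1) + 1)"

definition perm_pi :: "nat \<Rightarrow> nat \<Rightarrow> nat \<Rightarrow> nat \<Rightarrow> int" where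
  "perm_pi n \<sigma> b f = (int \<sigma> * (int f - int b)) mod int n"

definition hash_h :: "nat \<Rightarrow> nat \<Rightarrow> nat \<Rightarrow> nat \<Rightarrow> nat \<Rightarrow> int" where
  "hash_h n B \<sigma> b f = \<lfloor>(real B / real n) * real_of_int (perm_pi n \<sigma> b f) + 1/2\<rfloor>"

text \<open>o_{f,sigma,b}(f'), an element of [n]; n/B is an integer since B divides n.\<close>
definition offset_o :: "nat \<Rightarrow> nat \<Rightarrow> nat \<Rightarrow> nat \<Rightarrow> nat \<Rightarrow> nat \<Rightarrow> nat" where
  "offset_o n B f \<sigma> b f' =
     nat ((perm_pi n \<sigma> b f' - int (n div B) * hash_h n B \<sigma> b f) mod int n)"

text \<open>h_r with the list sb = [(sigma_1,b_1),...,(sigma_r,b_r)], r = length sb.\<close>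
definition h_r :: "nat \<Rightarrow> nat \<Rightarrow> nat \<Rightarrow> (nat \<Rightarrow> real) \<Rightarrow> nat \<Rightarrow> real \<Rightarrow> real \<Rightarrow>
                   nat \<Rightarrow> nat \<Rightarrow> (nat \<times> nat) list \<Rightarrow> real" where
  "h_r n B F G d \<beta> lam f f' sb =
     exp (- lam * \<beta>) * exp (lam * (\<Sum>p\<leftarrow>sb. G (offset_o n B f (fst p) (snd p) f')))
       * Mfun n B F lam ^ (d - length sb)"

definition odd_res :: "nat \<Rightarrow> nat set" where
  "odd_res n = {\<sigma>. \<sigma> < n \<and> odd \<sigma>}"

end

theory Submission
  imports Defs "HOL-Computational_Algebra.Factorial_Ring" "HOL-Number_Theory.Cong"
begin

text \<open>Appending a pair \<open>(\<sigma>, b)\<close> multiplies \<open>h_r\<close> by \<open>exp (\<lambda> G o) / M(\<lambda>)\<close>, where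
  \<open>o = o_{f,\<sigma>,b}(f')\<close>, so it suffices to bound the average of \<open>exp (\<lambda> G o)\<close> over \<open>\<sigma>\<close> and
  \<open>b\<close> by \<open>M(\<lambda>)\<close>. Since \<open>G \<le> \<epsilon>\<close> outside the window \<open>|o| < L = n/B\<close> and \<open>G \<le> 1\<close> inside it,
  this amounts to showing that \<open>o\<close> falls into the window for at most a fraction \<open>2/B + 1/n\<close>
  of the pairs.

  Modulo \<open>n\<close>, \<open>o \<equiv> \<sigma>(f' - f) + e\<close>, where \<open>e\<close> is the centred remainder of \<open>\<pi>(f)\<close> modulo \<open>L\<close>;
  for fixed odd \<open>\<sigma>\<close> the map \<open>b \<mapsto> \<pi>(f)\<close> is a bijection of \<open>[n]\<close>, so \<open>e\<close> runs through the
  centred remainders of \<open>0, \<dots>, n - 1\<close>. Writing \<open>f' - f = 2\<^sup>s u\<close> with \<open>u\<close> odd, \<open>\<sigma>(f' - f)\<close>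
  takes each odd multiple of \<open>2\<^sup>s\<close> modulo \<open>n\<close> exactly \<open>2\<^sup>s\<close> times, and the count splits into
  the cases \<open>2\<^sup>s\<^sup>+\<^sup>1 \<le> L\<close>, where only the residue of \<open>\<pi>(f)\<close> modulo \<open>2\<^sup>s\<^sup>+\<^sup>1\<close> matters, and
  \<open>L \<le> 2\<^sup>s\<close>, where for each \<open>\<pi>(f)\<close> at most one point of the window is reachable, and only
  if \<open>2\<^sup>s = L\<close>.\<close>

section \<open>Odd multipliers modulo a power of two\<close>

lemma card_residue_class_le:
  fixes m n :: nat and c :: int
  assumes "m dvd n" "m > 0"
  shows "card {x. x < n \<and> [int x = c] (mod int m)} \<le> n div m"
proof -
  let ?S = "{x. x < n \<and> [int x = c] (mod int m)}"
  have "inj_on (\<lambda>x. x div m) ?S"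
  proof (rule inj_onI)
    fix x y assume "x \<in> ?S" "y \<in> ?S" and div_eq: "x div m = y div m"
    then have "[int x = int y] (mod int m)"
      by (metis (no_types, lifting) cong_sym cong_trans mem_Collect_eq)
    then have "x mod m = y mod m" by (metis cong_int_iff cong_def)
    then show "x = y" using div_eq by (metis div_mult_mod_eq)
  qed
  moreover have "(\<lambda>x. x div m) ` ?S \<subseteq> {..<n div m}"
    using assms by (auto elim!: dvdE simp: less_mult_imp_div_less mult.commute)
  ultimately have "card ?S \<le> card {..<n div m}" by (intro card_inj_on_le) auto
  then show ?thesis by simp
qed

lemma odd_multiple_cong:
  fixes a u z :: int
  assumes "odd a" "odd u" "[a * (2^s * u) = z] (mod 2^(s+1))"
  shows "[z = 2^s] (mod 2^(s+1))"
proof -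
  obtain w where w: "a * u = 2 * w + 1" using assms(1,2) by (metis even_mult_iff oddE)
  have "a * (2^s * u) - 2^s = 2^s * (a * u - 1)" by (simp add: algebra_simps)
  also have "\<dots> = 2^(s+1) * w" using w by simp
  finally have "[a * (2^s * u) = 2^s] (mod 2^(s+1))" by (simp add: cong_iff_dvd_diff)
  then show ?thesis using assms(3) by (metis cong_sym cong_trans)
qed

lemma cong_diff_iff_cong_of_cong:
  fixes c x y a m :: int
  assumes "[c = x] (mod m)"
  shows "[y - c = a] (mod m) \<longleftrightarrow> [x = y - a] (mod m)"
  using assms by (smt (verit, ccfv_SIG) cong_diff_iff_cong_0 cong_sym_eq cong_trans)

lemma card_odd_multipliers_le:
  fixes n k s :: nat and u z :: int
  assumes n: "n = 2^k" and "s < k" "odd u"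
  shows "card {\<sigma> \<in> odd_res n. [int \<sigma> * (2^s * u) = z] (mod int n)}
    \<le> 2^s * of_bool [z = 2^s] (mod 2^(s+1))"
proof (cases "{\<sigma> \<in> odd_res n. [int \<sigma> * (2^s * u) = z] (mod int n)} = {}")
  case True
  then show ?thesis by (metis card.empty zero_le)
next
  case False
  let ?S = "{\<sigma> \<in> odd_res n. [int \<sigma> * (2^s * u) = z] (mod int n)}"
  obtain \<sigma>\<^sub>0 where \<sigma>\<^sub>0: "\<sigma>\<^sub>0 \<in> odd_res n" "[int \<sigma>\<^sub>0 * (2^s * u) = z] (mod int n)"
    using False by blast
  have n_split: "n = 2^s * 2^(k-s)" using n assms(2) by (simp flip: power_add)
  have cong_z: "[z = 2^s] (mod 2^(s+1))"
  proof (rule odd_multiple_cong)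
    have "(2::int)^(s+1) dvd 2^k" using assms(2) by (intro le_imp_power_dvd) simp
    then have "(2::int)^(s+1) dvd int n" using n by simp
    then show "[int \<sigma>\<^sub>0 * (2^s * u) = z] (mod 2^(s+1))" by (rule cong_dvd_modulus[OF \<sigma>\<^sub>0(2)])
  qed (use \<sigma>\<^sub>0(1) assms(3) in \<open>auto simp: odd_res_def\<close>)
  have "?S \<subseteq> {x. x < n \<and> [int x = int \<sigma>\<^sub>0] (mod int (2^(k-s)))}"
  proof
    fix x assume x: "x \<in> ?S"
    then have "[int x * (2^s * u) = int \<sigma>\<^sub>0 * (2^s * u)] (mod int n)"
      using \<sigma>\<^sub>0(2) by (metis (no_types, lifting) cong_sym cong_trans mem_Collect_eq)
    then have "2^s * 2^(k-s) dvd 2^s * ((int x - int \<sigma>\<^sub>0) * u)"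
      unfolding cong_iff_dvd_diff n_split by (simp add: algebra_simps)
    then have "2^(k-s) dvd (int x - int \<sigma>\<^sub>0) * u" by simp
    then have "[int x = int \<sigma>\<^sub>0] (mod 2^(k-s))"
      using assms(3) by (simp add: cong_iff_dvd_diff coprime_dvd_mult_left_iff)
    then show "x \<in> {x. x < n \<and> [int x = int \<sigma>\<^sub>0] (mod int (2^(k-s)))}"
      using x by (simp add: odd_res_def)
  qed
  then have "card ?S \<le> card {x. x < n \<and> [int x = int \<sigma>\<^sub>0] (mod int (2^(k-s)))}"
    by (intro card_mono) auto
  also have "\<dots> \<le> n div 2^(k-s)"
    using n assms(2) by (intro card_residue_class_le) (auto simp: le_imp_power_dvd)
  also have "n div 2^(k-s) = 2^s" using n_split by simp
  finally show ?thesis using cong_z by simp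
qed

lemma card_odd_res:
  assumes "even n"
  shows "card (odd_res n) = n div 2"
proof -
  have "odd_res n = (\<lambda>i. 2 * i + 1) ` {..<n div 2}"
  proof
    show "odd_res n \<subseteq> (\<lambda>i. 2 * i + 1) ` {..<n div 2}"
    proof
      fix x assume "x \<in> odd_res n"
      then have "x = 2 * (x div 2) + 1" "x div 2 < n div 2"
        using assms by (auto simp: odd_res_def elim!: oddE evenE)
      then show "x \<in> (\<lambda>i. 2 * i + 1) ` {..<n div 2}" by blast
    qed
    obtain m where "n = 2 * m" using assms by blast
    then show "(\<lambda>i. 2 * i + 1) ` {..<n div 2} \<subseteq> odd_res n"
      by (auto simp: odd_res_def)
  qed
  moreover have "inj_on (\<lambda>i::nat. 2 * i + 1) {..<n div 2}" by (auto simp: inj_on_def)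
  ultimately show ?thesis by (simp add: card_image)
qed

section \<open>Centred remainders and offsets\<close>

text \<open>\<open>(2x + L) div 2L\<close> is \<open>x/L\<close> rounded to the nearest integer, so \<open>centered_rem L x\<close> is the
  representative of \<open>x mod L\<close> in \<open>[-L/2, L/2)\<close>.\<close>
definition centered_rem :: "nat \<Rightarrow> int \<Rightarrow> int" where
  "centered_rem L x = x - int L * ((2 * x + int L) div (2 * int L))"

lemma centered_rem_bounds:
  assumes "L > 0"
  shows "- int L \<le> 2 * centered_rem L x" "2 * centered_rem L x < int L"
proof -
  have "2 * x + int L = 2 * int L * ((2 * x + int L) div (2 * int L)) + (2 * x + int L) mod (2 * int L)"
    by simp
  moreover have "0 \<le> (2 * x + int L) mod (2 * int L)" "(2 * x + int L) mod (2 * int L) < 2 * int L"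
    using assms by simp_all
  ultimately show "- int L \<le> 2 * centered_rem L x" "2 * centered_rem L x < int L"
    unfolding centered_rem_def by (auto simp: algebra_simps)
qed

lemma cong_centered_rem: "[centered_rem L x = x] (mod int L)"
  by (simp add: centered_rem_def cong_iff_dvd_diff)

lemma hash_h_eq_round:
  assumes "n = B * L" "B > 0" "L > 0"
  shows "hash_h n B \<sigma> b f = (2 * perm_pi n \<sigma> b f + int L) div (2 * int L)"
proof -
  have "real B / real n * perm_pi n \<sigma> b f + 1/2
      = real_of_int (2 * perm_pi n \<sigma> b f + int L) / real_of_int (2 * int L)"
    using assms by (simp add: field_simps)
  then show ?thesis unfolding hash_h_def by (simp only: floor_divide_of_int_eq)
qed

lemma zrep_offset_cong:
  assumes "n = B * L" "B > 0" "L > 0"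
  shows "[zrep n (offset_o n B f \<sigma> b f')
    = int \<sigma> * (int f' - int f) + centered_rem L (perm_pi n \<sigma> b f)] (mod int n)"
proof -
  let ?h = "hash_h n B \<sigma> b f"
  have "n div B = L" "n > 0" using assms by simp_all
  have "[zrep n (offset_o n B f \<sigma> b f') = int (offset_o n B f \<sigma> b f')] (mod int n)"
    by (simp add: zrep_def cong_iff_dvd_diff)
  also have "[int (offset_o n B f \<sigma> b f') = perm_pi n \<sigma> b f' - int L * ?h] (mod int n)"
    using \<open>n div B = L\<close> \<open>n > 0\<close> by (simp add: offset_o_def)
  also have "[perm_pi n \<sigma> b f' - int L * ?h = int \<sigma> * (int f' - int b) - int L * ?h] (mod int n)"
    by (intro cong_diff) (simp_all add: perm_pi_def)
  also have "int \<sigma> * (int f' - int b) - int L * ?h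
      = int \<sigma> * (int f' - int f) + (int \<sigma> * (int f - int b) - int L * ?h)"
    by (simp add: algebra_simps)
  also have "[\<dots> = int \<sigma> * (int f' - int f) + (perm_pi n \<sigma> b f - int L * ?h)] (mod int n)"
    by (intro cong_add cong_diff) (simp_all add: perm_pi_def cong_sym)
  also have "perm_pi n \<sigma> b f - int L * ?h = centered_rem L (perm_pi n \<sigma> b f)"
    using hash_h_eq_round[OF assms] by (simp add: centered_rem_def)
  finally show ?thesis .
qed

lemma bij_betw_perm_pi:
  assumes "coprime \<sigma> n" "n > 0"
  shows "bij_betw (\<lambda>b. nat (perm_pi n \<sigma> b f)) {..<n} {..<n}"
proof -
  let ?g = "\<lambda>b. nat (perm_pi n \<sigma> b f)"
  have "inj_on ?g {..<n}"
  proof (rule inj_onI)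
    fix b b' assume b: "b \<in> {..<n}" "b' \<in> {..<n}" and "?g b = ?g b'"
    then have "perm_pi n \<sigma> b f = perm_pi n \<sigma> b' f"
      using assms(2) unfolding perm_pi_def by (simp add: nat_eq_iff2)
    then have "[int \<sigma> * (int f - int b) = int \<sigma> * (int f - int b')] (mod int n)"
      by (simp add: perm_pi_def cong_def)
    then have "[int f - int b = int f - int b'] (mod int n)"
      using assms(1) by (simp add: cong_mult_lcancel)
    then have "[int b = int b'] (mod int n)"
      by (simp only: diff_conv_add_uminus cong_add_lcancel cong_minus_minus_iff)
    then show "b = b'" using b by (metis cong_int_iff cong_def lessThan_iff mod_less)
  qed
  moreover have "?g ` {..<n} \<subseteq> {..<n}"
    using assms(2) by (auto simp: perm_pi_def nat_less_iff)
  ultimately show ?thesis by (simp add: bij_betw_def endo_inj_surj)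
qed

section \<open>Counting offsets in the window\<close>

text \<open>With \<open>D = f' - f\<close> and \<open>e\<close> the centred remainder of \<open>\<pi>(f)\<close> modulo \<open>L\<close>, \<open>\<sigma>\<close> lies in this
  set whenever \<open>o_{f,\<sigma>,b}(f')\<close> falls into the window \<open>|o| < L\<close> (see \<open>zrep_offset_cong\<close>).\<close>
definition near_zero_multipliers :: "nat \<Rightarrow> nat \<Rightarrow> int \<Rightarrow> int \<Rightarrow> nat set" where
  "near_zero_multipliers n L D e =
     {\<sigma> \<in> odd_res n. \<exists>y. \<bar>y\<bar> < int L \<and> [int \<sigma> * D + e = y] (mod int n)}"

lemma card_near_zero_multipliers_le_sum:
  fixes n k s L :: nat and u e :: int
  assumes "n = 2^k" "s < k" "odd u"
  shows "card (near_zero_multipliers n L (2^s * u) e)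
    \<le> (\<Sum>y\<in>{- int L<..<int L}. 2^s * of_bool [y - e = 2^s] (mod 2^(s+1)))"
proof -
  let ?I = "{- int L<..<int L}"
  have "near_zero_multipliers n L (2^s * u) e
      \<subseteq> (\<Union>y\<in>?I. {\<sigma> \<in> odd_res n. [int \<sigma> * (2^s * u) = y - e] (mod int n)})"
    by (force simp: near_zero_multipliers_def cong_iff_dvd_diff algebra_simps abs_less_iff)
  then have "card (near_zero_multipliers n L (2^s * u) e)
      \<le> card (\<Union>y\<in>?I. {\<sigma> \<in> odd_res n. [int \<sigma> * (2^s * u) = y - e] (mod int n)})"
    by (intro card_mono) (auto simp: odd_res_def)
  also have "\<dots> \<le> (\<Sum>y\<in>?I. card {\<sigma> \<in> odd_res n. [int \<sigma> * (2^s * u) = y - e] (mod int n)})"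
    by (rule card_UN_le) simp
  also have "\<dots> \<le> (\<Sum>y\<in>?I. 2^s * of_bool [y - e = 2^s] (mod 2^(s+1)))"
    by (intro sum_mono card_odd_multipliers_le[OF assms])
  finally show ?thesis .
qed

lemma sum_card_near_zero_multipliers_le_small:
  fixes n k s L l :: nat and u :: int
  assumes n: "n = 2^k" and L: "L = 2^l" and "s < k" "s < l" "odd u"
  shows "2 * (\<Sum>x<n. card (near_zero_multipliers n L (2^s * u) (centered_rem L x)))
    \<le> (2 * L - 1) * n"
proof -
  let ?I = "{- int L<..<int L}"
  let ?w = "\<lambda>z::int. 2^s * of_bool [z = 2^s] (mod 2^(s+1)) :: nat"
  have "(2::int)^(s+1) dvd 2^l" using assms(4) by (intro le_imp_power_dvd) simp
  then have dvd_L: "(2::int)^(s+1) dvd int L" using L by simp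
  have "(2::nat)^(s+1) dvd 2^k" using assms(3) by (intro le_imp_power_dvd) simp
  then have dvd_n: "(2::nat)^(s+1) dvd n" using n by simp
  have card_I: "card ?I = 2 * L - 1" by simp
  have column: "(\<Sum>x<n. ?w (y - centered_rem L x)) \<le> 2^s * (n div 2^(s+1))" for y
  proof -
    \<comment> \<open>As \<open>2\<^sup>s\<^sup>+\<^sup>1\<close> divides \<open>L\<close>, the weight depends on \<open>x\<close> only through \<open>x mod 2\<^sup>s\<^sup>+\<^sup>1\<close>.\<close>
    have "[y - centered_rem L x = 2^s] (mod 2^(s+1)) \<longleftrightarrow> [int x = y - 2^s] (mod 2^(s+1))"
      for x
    proof -
      have "[centered_rem L x = int x] (mod 2^(s+1))"
        using cong_centered_rem dvd_L by (rule cong_dvd_modulus)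
      then show ?thesis by (rule cong_diff_iff_cong_of_cong)
    qed
    then have "(\<Sum>x<n. ?w (y - centered_rem L x))
        = 2^s * card ({..<n} \<inter> {x. [int x = y - 2^s] (mod 2^(s+1))})"
      by (simp add: sum_distrib_left[symmetric])
    also have "\<dots> \<le> 2^s * (n div 2^(s+1))"
      using card_residue_class_le[OF dvd_n, of "y - 2^s"] by (simp add: Int_def)
    finally show ?thesis .
  qed
  have "(\<Sum>x<n. card (near_zero_multipliers n L (2^s * u) (centered_rem L x)))
      \<le> (\<Sum>x<n. \<Sum>y\<in>?I. ?w (y - centered_rem L x))"
    by (intro sum_mono card_near_zero_multipliers_le_sum[OF n assms(3,5)])
  also have "\<dots> = (\<Sum>y\<in>?I. \<Sum>x<n. ?w (y - centered_rem L x))"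
    by (rule sum.swap)
  also have "\<dots> \<le> (\<Sum>y\<in>?I. 2^s * (n div 2^(s+1)))"
    by (intro sum_mono column)
  also have "\<dots> = (2 * L - 1) * (2^s * (n div 2^(s+1)))"
    using card_I by (simp only: sum_constant of_nat_id)
  finally have "2 * (\<Sum>x<n. card (near_zero_multipliers n L (2^s * u) (centered_rem L x)))
      \<le> (2 * L - 1) * (2 * 2^s * (n div 2^(s+1)))"
    by simp
  also have "2 * 2^s * (n div 2^(s+1)) = n"
    using dvd_n by simp
  finally show ?thesis .
qed

lemma odd_multiple_eq_pm:
  fixes P z q :: int
  assumes "P > 0" "z = P + 2 * P * q" "2 * \<bar>z\<bar> < 3 * P"
  shows "z = P \<or> z = - P"
proof -
  have "z = P * (1 + 2 * q)" using assms(2) by (simp add: algebra_simps)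
  then have "\<bar>z\<bar> = P * \<bar>1 + 2 * q\<bar>" using assms(1) by (simp add: abs_mult)
  then have "P * (2 * \<bar>1 + 2 * q\<bar>) < P * 3" using assms(3) by (simp add: algebra_simps)
  then have "2 * \<bar>1 + 2 * q\<bar> < 3" using assms(1) by (simp only: mult_less_cancel_left_pos)
  then have "q = 0 \<or> q = -1" by presburger
  then show ?thesis using assms(2) by auto
qed

lemma card_near_zero_multipliers_le_large:
  fixes n k s L l :: nat and u e :: int
  assumes "n = 2^k" "s < k" "odd u" and L: "L = 2^l" "l \<le> s"
    and e: "- int L \<le> 2 * e" "2 * e < int L"
  shows "card (near_zero_multipliers n L (2^s * u) e) \<le> L"
proof -
  let ?Y = "{y \<in> {- int L<..<int L}. [y - e = 2^s] (mod 2^(s+1))}"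
  have L_le: "int L \<le> 2^s" using L by (simp add: power_increasing)
  have pm: "y - e = 2^s \<or> y - e = - (2^s)" if "y \<in> ?Y" for y
  proof -
    \<comment> \<open>\<open>y - e\<close> is an odd multiple of \<open>2\<^sup>s\<close> of absolute value below \<open>3L/2 \<le> 3 \<cdot> 2\<^sup>s/2\<close>.\<close>
    have "[2^s = y - e] (mod 2^(s+1))" using that by (simp add: cong_sym)
    then obtain q where "y - e = 2^s + 2^(s+1) * q" by (metis cong_iff_lin)
    moreover have "2 * \<bar>y - e\<bar> < 3 * int L" using that e by (auto simp: abs_if)
    then have "2 * \<bar>y - e\<bar> < 3 * 2^s" using L_le by linarith
    ultimately show ?thesis by (intro odd_multiple_eq_pm) (auto simp: algebra_simps)
  qed
  have "card (near_zero_multipliers n L (2^s * u) e)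
      \<le> (\<Sum>y\<in>{- int L<..<int L}. 2^s * of_bool [y - e = 2^s] (mod 2^(s+1)))"
    by (rule card_near_zero_multipliers_le_sum[OF assms(1-3)])
  also have "\<dots> = 2^s * card ?Y"
    by (simp add: sum_distrib_left[symmetric] Int_def)
  also have "\<dots> \<le> L"
  proof (cases "?Y = {}")
    case True
    then show ?thesis by (simp only: card.empty)
  next
    case False
    then obtain y\<^sub>0 where "y\<^sub>0 \<in> ?Y" by blast
    then have "2 * 2^s < 3 * int L" using pm e by fastforce
    then have "(2::int)^s < 2 * int L" by linarith
    then have "(2::int)^s < 2^(l+1)" using L by simp
    then have "s \<le> l" using power_strict_increasing_iff[of "2::int" s "l+1"] by simp
    then have "2^s = L" using L by simp
    moreover have "card ?Y \<le> 1"
    proof -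
      have "y = y'" if "y \<in> ?Y" "y' \<in> ?Y" for y y'
        using pm[OF that(1)] pm[OF that(2)] that \<open>2^s = L\<close> by auto
      moreover have "finite ?Y" by (rule finite_subset[of _ "{- int L<..<int L}"]) auto
      ultimately have "card ?Y \<le> Suc 0" using card_le_Suc0_iff_eq by blast
      then show ?thesis by simp
    qed
    ultimately show ?thesis by simp
  qed
  finally show ?thesis .
qed

lemma sum_card_near_zero_multipliers_le:
  fixes n k L l :: nat and D :: int
  assumes n: "n = 2^k" and L: "L = 2^l" and "D \<noteq> 0" "\<bar>D\<bar> < int n"
  shows "2 * (\<Sum>x<n. card (near_zero_multipliers n L D (centered_rem L x))) \<le> (2 * L + 1) * n"
proof -
  define s where "s = multiplicity 2 D"
  obtain u where D: "D = 2^s * u" and "odd u"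
    using multiplicity_decompose'[of D 2] assms(3) unfolding s_def by auto
  have "u \<noteq> 0" using \<open>odd u\<close> by auto
  then have "(2::int)^s * 1 \<le> 2^s * \<bar>u\<bar>" by (intro mult_left_mono) auto
  then have "(2::int)^s \<le> \<bar>D\<bar>" using D by (simp add: abs_mult)
  moreover have "int n = 2^k" using n by simp
  ultimately have "(2::int)^s < 2^k" using assms(4) by linarith
  then have "s < k" by simp
  show ?thesis
  proof (cases "s < l")
    case True
    have "2 * (\<Sum>x<n. card (near_zero_multipliers n L D (centered_rem L x))) \<le> (2 * L - 1) * n"
      unfolding D by (rule sum_card_near_zero_multipliers_le_small[OF n L \<open>s < k\<close> True \<open>odd u\<close>])
    also have "\<dots> \<le> (2 * L + 1) * n" by (intro mult_right_mono) auto
    finally show ?thesis .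
  next
    case False
    have "(\<Sum>x<n. card (near_zero_multipliers n L D (centered_rem L x))) \<le> (\<Sum>x<n. L)"
      unfolding D using L False
      by (intro sum_mono card_near_zero_multipliers_le_large[OF n \<open>s < k\<close> \<open>odd u\<close> L]
          centered_rem_bounds) auto
    then show ?thesis by (simp add: algebra_simps)
  qed
qed

lemma card_window_offsets_le:
  fixes n k B L \<sigma> f f' :: nat
  assumes n: "n = 2^k" and nBL: "n = B * L" and \<sigma>: "\<sigma> \<in> odd_res n"
  shows "card {b. b < n \<and> \<bar>zrep n (offset_o n B f \<sigma> b f')\<bar> < int L}
    \<le> card {x. x < n \<and> \<sigma> \<in> near_zero_multipliers n L (int f' - int f) (centered_rem L x)}"
proof -
  let ?g = "\<lambda>b. nat (perm_pi n \<sigma> b f)"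
  let ?P = "\<lambda>x. \<sigma> \<in> near_zero_multipliers n L (int f' - int f) (centered_rem L x)"
  have "B * L > 0" using n nBL by simp
  then have "n > 0" "B > 0" "L > 0" using nBL by simp_all
  have "{b. b < n \<and> \<bar>zrep n (offset_o n B f \<sigma> b f')\<bar> < int L} \<subseteq> {b \<in> {..<n}. ?P (?g b)}"
  proof
    fix b assume "b \<in> {b. b < n \<and> \<bar>zrep n (offset_o n B f \<sigma> b f')\<bar> < int L}"
    then have "b < n" and window: "\<bar>zrep n (offset_o n B f \<sigma> b f')\<bar> < int L" by auto
    have "int (?g b) = perm_pi n \<sigma> b f" using \<open>n > 0\<close> by (simp add: perm_pi_def)
    then show "b \<in> {b \<in> {..<n}. ?P (?g b)}"
      using zrep_offset_cong[OF nBL \<open>B > 0\<close> \<open>L > 0\<close>, of f \<sigma> b f'] window \<sigma> \<open>b < n\<close>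
      by (auto simp: near_zero_multipliers_def cong_sym_eq)
  qed
  then have "card {b. b < n \<and> \<bar>zrep n (offset_o n B f \<sigma> b f')\<bar> < int L}
      \<le> card {b \<in> {..<n}. ?P (?g b)}"
    by (intro card_mono) auto
  also have "\<dots> = card {x \<in> {..<n}. ?P x}"
  proof -
    have "coprime \<sigma> n" using n \<sigma> by (simp add: odd_res_def)
    then have "bij_betw ?g {..<n} {..<n}" using \<open>n > 0\<close> by (rule bij_betw_perm_pi)
    then show ?thesis by (rule bij_betw_same_card[OF bij_betw_Collect]) simp
  qed
  finally show ?thesis by simp
qed

lemma sum_card_window_offsets_le:
  fixes n k B j f f' :: nat
  assumes n: "n = 2^k" and B: "B = 2^j" "j \<le> k" and "f < n" "f' < n" "f \<noteq> f'"
  shows "2 * (\<Sum>\<sigma>\<in>odd_res n. card {b. b < n \<and> \<bar>zrep n (offset_o n B f \<sigma> b f')\<bar> < int (n div B)})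
    \<le> (2 * (n div B) + 1) * n"
proof -
  define L where "L = n div B"
  have L: "L = 2^(k-j)" using n B by (simp add: L_def power_diff)
  have nBL: "n = B * L" using n B L by (simp flip: power_add)
  let ?near = "\<lambda>x. near_zero_multipliers n L (int f' - int f) (centered_rem L x)"
  have "(\<Sum>\<sigma>\<in>odd_res n. card {b. b < n \<and> \<bar>zrep n (offset_o n B f \<sigma> b f')\<bar> < int L})
      \<le> (\<Sum>\<sigma>\<in>odd_res n. card {x \<in> {..<n}. \<sigma> \<in> ?near x})"
    using card_window_offsets_le[OF n nBL] by (intro sum_mono) simp
  also have "\<dots> = (\<Sum>x<n. card (?near x))"
  proof (rule sum_multicount_gen)
    show "\<forall>x\<in>{..<n}. card {\<sigma> \<in> odd_res n. \<sigma> \<in> ?near x} = card (?near x)"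
      by (auto simp: near_zero_multipliers_def intro: arg_cong[where f = card])
  qed (simp_all add: odd_res_def)
  finally have "2 * (\<Sum>\<sigma>\<in>odd_res n. card {b. b < n \<and> \<bar>zrep n (offset_o n B f \<sigma> b f')\<bar> < int L})
      \<le> 2 * (\<Sum>x<n. card (?near x))"
    by simp
  also have "\<dots> \<le> (2 * L + 1) * n"
    using assms(4-6) by (intro sum_card_near_zero_multipliers_le[OF n L]) auto
  finally show ?thesis unfolding L_def .
qed

section \<open>The exponential moment of the filter\<close>

lemma flat_filter_le_eps:
  assumes "flat_filter n B F G" "B > 0" "f < n" "real n / real B \<le> real_of_int \<bar>zrep n f\<bar>"
  shows "G f \<le> flat_eps F"
proof -
  have "0 < real n / real B" using assms(2,3) by simp
  then have "real n / (real B * real_of_int \<bar>zrep n f\<bar>) \<le> 1"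
    using assms(2,4) by (simp add: divide_le_eq_1 field_simps)
  then have "(real n / (real B * real_of_int \<bar>zrep n f\<bar>)) ^ (F - 1) \<le> 1"
    by (intro power_le_one) auto
  moreover have "G f \<le> flat_eps F * (real n / (real B * real_of_int \<bar>zrep n f\<bar>)) ^ (F - 1)"
    using assms(1,3,4) unfolding flat_filter_def by blast
  moreover have "flat_eps F \<ge> 0" by (simp add: flat_eps_def)
  ultimately show ?thesis by (metis mult_left_mono mult.right_neutral order_trans)
qed

lemma exp_flat_filter_le:
  assumes "flat_filter n B F G" "B dvd n" "B > 0" "f < n" "lam \<ge> 0"
  shows "exp (lam * G f) \<le> exp (lam * flat_eps F)
    * (1 + (exp (lam * (1 - flat_eps F)) - 1) * of_bool (\<bar>zrep n f\<bar> < int (n div B)))"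
proof (cases "\<bar>zrep n f\<bar> < int (n div B)")
  case True
  have "G f \<le> 1" using assms(1,4) by (simp add: flat_filter_def)
  then have "exp (lam * G f) \<le> exp (lam * 1)" using assms(5) by (simp add: mult_left_le)
  also have "\<dots> = exp (lam * flat_eps F) * exp (lam * (1 - flat_eps F))"
    by (simp add: algebra_simps flip: exp_add)
  finally show ?thesis using True by simp
next
  case False
  then have "real (n div B) \<le> real_of_int \<bar>zrep n f\<bar>"
    by (metis linorder_not_le of_int_le_iff of_int_of_nat_eq)
  then have "real n / real B \<le> real_of_int \<bar>zrep n f\<bar>"
    using assms(2) by (simp add: real_of_nat_div)
  then have "G f \<le> flat_eps F" by (rule flat_filter_le_eps[OF assms(1,3,4)])
  then show ?thesis using False assms(5) by (simp add: mult_left_mono)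
qed

lemma Mfun_pos:
  assumes "lam \<ge> 0"
  shows "Mfun n B F lam > 0"
proof -
  have "flat_eps F \<le> 1" by (simp add: flat_eps_def power_le_one)
  then have "1 \<le> exp (lam * (1 - flat_eps F))" using assms by simp
  then show ?thesis by (simp add: Mfun_def add_nonneg_pos)
qed

lemma sum_exp_flat_filter_le:
  fixes n k B j f f' :: nat
  assumes n: "n = 2^k" and B: "B = 2^j" "0 < j" "j \<le> k"
    and G: "flat_filter n B F G" and "f < n" "f' < n" "f \<noteq> f'" and "lam \<ge> 0"
  shows "(\<Sum>\<sigma>\<in>odd_res n. \<Sum>b<n. exp (lam * G (offset_o n B f \<sigma> b f')))
    \<le> real (card (odd_res n)) * real n * Mfun n B F lam"
proof -
  define E where "E = exp (lam * flat_eps F)"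
  define X where "X = exp (lam * (1 - flat_eps F))"
  define c where "c = real (card (odd_res n))"
  define N where
    "N = (\<Sum>\<sigma>\<in>odd_res n. card {b. b < n \<and> \<bar>zrep n (offset_o n B f \<sigma> b f')\<bar> < int (n div B)})"
  have "B dvd n" using B n by (simp add: le_imp_power_dvd)
  have "1 \<le> X" unfolding X_def using \<open>lam \<ge> 0\<close> by (simp add: flat_eps_def power_le_one)
  have "E > 0" by (simp add: E_def)
  have N_le: "real N \<le> (2 / real B + 1 / real n) * c * real n"
  proof -
    have count: "real (2 * N) \<le> real ((2 * (n div B) + 1) * n)"
      unfolding N_def of_nat_le_iff by (rule sum_card_window_offsets_le[OF n B(1,3) assms(6-8)])
    have c_eq: "c = real n / 2"
      using n B unfolding c_def by (cases k) (simp_all add: card_odd_res)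
    have "(2 / real B + 1 / real n) * c * real n = real (n div B) * real n + real n / 2"
      unfolding c_eq using n B(1) \<open>B dvd n\<close> by (simp add: real_of_nat_div field_simps)
    then show ?thesis using count by simp
  qed
  have "(\<Sum>\<sigma>\<in>odd_res n. \<Sum>b<n. exp (lam * G (offset_o n B f \<sigma> b f')))
      \<le> (\<Sum>\<sigma>\<in>odd_res n. \<Sum>b<n.
            E * (1 + (X - 1) * of_bool (\<bar>zrep n (offset_o n B f \<sigma> b f')\<bar> < int (n div B))))"
    unfolding E_def X_def using n \<open>B dvd n\<close> B(1) assms(9)
    by (intro sum_mono exp_flat_filter_le[OF G]) (auto simp: offset_o_def nat_less_iff)
  also have "\<dots> = E * (\<Sum>\<sigma>\<in>odd_res n. real n + (X - 1)
      * real (card {b. b < n \<and> \<bar>zrep n (offset_o n B f \<sigma> b f')\<bar> < int (n div B)}))"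
    by (simp add: sum_distrib_left[symmetric] sum.distrib Int_def)
  also have "\<dots> = E * (c * real n + (X - 1) * real N)"
    by (simp add: N_def c_def sum.distrib sum_distrib_left)
  also have "\<dots> \<le> E * (c * real n + (X - 1) * ((2 / real B + 1 / real n) * c * real n))"
    using N_le \<open>1 \<le> X\<close> \<open>E > 0\<close> by (intro mult_left_mono add_left_mono) auto
  also have "\<dots> = c * real n * Mfun n B F lam"
    unfolding Mfun_def E_def[symmetric] X_def[symmetric] using n by (simp add: field_simps)
  finally show ?thesis unfolding c_def .
qed

lemma h_r_snoc:
  assumes "length sb < d"
  shows "h_r n B F G d \<beta> lam f f' (sb @ [(\<sigma>, b)]) * Mfun n B F lam
    = h_r n B F G d \<beta> lam f f' sb * exp (lam * G (offset_o n B f \<sigma> b f'))"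
proof -
  have "d - length sb = Suc (d - length (sb @ [(\<sigma>, b)]))" using assms by simp
  then show ?thesis by (simp add: h_r_def distrib_left exp_add ac_simps)
qed

theorem lemma5p9:
  fixes n B F d :: nat and G :: "nat \<Rightarrow> real" and \<beta> lam :: real
    and f f' :: nat and sb :: "(nat \<times> nat) list"
  assumes "\<exists>k. n = 2 ^ k" and "\<exists>k. B = 2 ^ k" and "2 \<le> B" and "B \<le> n"
    and "F \<ge> 2" and "even F"
    and "flat_filter n B F G"
    and "d \<ge> 1" and "\<beta> > 0"
    and "f < n" and "f' < n" and "f \<noteq> f'"
    and "length sb < d" and "lam \<ge> 0"
    and "\<forall>p\<in>set sb. fst p \<in> odd_res n \<and> snd p < n"
  shows "h_r n B F G d \<beta> lam f f' sb \<ge>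
    (\<Sum>\<sigma>\<in>odd_res n. \<Sum>b<n. h_r n B F G d \<beta> lam f f' (sb @ [(\<sigma>, b)]))
      / (real (card (odd_res n)) * real n)"
proof -
  obtain k j where n: "n = 2^k" and B: "B = 2^j" using assms(1,2) by blast
  have "0 < j" using assms(3) B by (cases j) auto
  have "j \<le> k" using assms(4) n B by simp
  let ?H = "h_r n B F G d \<beta> lam f f' sb"
  let ?M = "Mfun n B F lam"
  let ?c = "real (card (odd_res n)) * real n"
  have "?M > 0" using assms(14) by (rule Mfun_pos)
  then have "?H \<ge> 0" by (simp add: h_r_def)
  have "1 \<in> odd_res n" "finite (odd_res n)" using assms(3,4) by (simp_all add: odd_res_def)
  then have "card (odd_res n) > 0" by (auto simp: card_gt_0_iff)
  then have "?c > 0" using assms(3,4) by simp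
  have snoc: "h_r n B F G d \<beta> lam f f' (sb @ [(\<sigma>, b)])
      = ?H / ?M * exp (lam * G (offset_o n B f \<sigma> b f'))" for \<sigma> b
    using h_r_snoc[OF assms(13), of n B F G \<beta> lam f f' \<sigma> b] \<open>?M > 0\<close> by (simp add: field_simps)
  have "(\<Sum>\<sigma>\<in>odd_res n. \<Sum>b<n. h_r n B F G d \<beta> lam f f' (sb @ [(\<sigma>, b)]))
      = ?H / ?M * (\<Sum>\<sigma>\<in>odd_res n. \<Sum>b<n. exp (lam * G (offset_o n B f \<sigma> b f')))"
    by (simp only: snoc sum_distrib_left)
  also have "\<dots> \<le> ?H / ?M * (?c * ?M)"
    using sum_exp_flat_filter_le[OF n B \<open>0 < j\<close> \<open>j \<le> k\<close> assms(7,10-12,14)] \<open>?H \<ge> 0\<close> \<open>?M > 0\<close>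
    by (intro mult_left_mono) auto
  also have "\<dots> = ?H * ?c" using \<open>?M > 0\<close> by simp
  finally show ?thesis using \<open>?c > 0\<close> by (simp add: divide_le_eq mult.commute)
qed

end
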